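(* Let $n\geq 3$ and let $o_1,o_2$ be two non-parallel $\mathcal{O}_n$-directions. Write $o_1=\alpha+\beta\zeta_n$ and $o_2=\gamma+\delta\zeta_n$ with $\alpha,\beta,\gamma,\delta\in\mathbb{Z}[\zeta_n+\bar\zeta_n]$. Let $G_{\{o_1,o_2\}}=\bigcap_{i=1}^2\bigcup_{t\in\mathcal{O}_n}(t+\mathbb{R}o_i)$ be the complete grid and let $M_{\{o_1,o_2\}}=\operatorname{lin}_{\mathbb{Z}[\zeta_n+\bar\zeta_n]}\left(\left\{\frac{1}{\alpha\delta-\beta\gamma}o_1,\frac{1}{\alpha\delta-\beta\gamma}o_2\right\}\right)$. Then $\mathcal{O}_n\subset G_{\{o_1,o_2\}}\subset\mathbb{C}$ and $G_{\{o_1,o_2\}}\subset M_{\{o_1,o_2\}}$.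
   Context: $\zeta_n$ is a primitive $n$th root of unity in $\mathbb{C}\cong\mathbb{R}^2$, $\bar\zeta_n$ its complex conjugate, $\mathcal{O}_n=\mathbb{Z}[\zeta_n]$. An $\mathcal{O}_n$-direction is an element of $\mathcal{O}_n\setminus\{0\}$. Every element of $\mathcal{O}_n$ can be written uniquely as $\varphi+\psi\zeta_n$ with $\varphi,\psi\in\mathbb{Z}[\zeta_n+\bar\zeta_n]$, so $\alpha,\beta,\gamma,\delta$ are uniquely determined, and $\alpha\delta-\beta\gamma\neq0$ since $o_1,o_2$ are non-parallel. $\operatorname{lin}_R(S)$ denotes the set of $R$-linear combinations of elements of $S$. *)

theory Defs
  imports Complex_Main
begin

definition primitive_root_of_unity :: "nat \<Rightarrow> complex \<Rightarrow> bool" where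
  "primitive_root_of_unity n z \<longleftrightarrow> z ^ n = 1 \<and> (\<forall>k. 0 < k \<and> k < n \<longrightarrow> z ^ k \<noteq> 1)"

definition zring :: "complex \<Rightarrow> complex set" where
  "zring x = {(\<Sum>i\<le>N. of_int (c i) * x ^ i) | (c :: nat \<Rightarrow> int) N. True}"

abbreviation cyc_ring :: "complex \<Rightarrow> complex set" where
  "cyc_ring \<zeta> \<equiv> zring \<zeta>"

abbreviation real_cyc_ring :: "complex \<Rightarrow> complex set" where
  "real_cyc_ring \<zeta> \<equiv> zring (\<zeta> + cnj \<zeta>)"

definition direction :: "complex \<Rightarrow> complex \<Rightarrow> bool" where
  "direction \<zeta> u \<longleftrightarrow> u \<in> cyc_ring \<zeta> \<and> u \<noteq> 0"

definition parallel :: "complex \<Rightarrow> complex \<Rightarrow> bool" where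
  "parallel u v \<longleftrightarrow> (\<exists>r::real. u = of_real r * v \<or> v = of_real r * u)"

definition complete_grid :: "complex \<Rightarrow> complex set \<Rightarrow> complex set" where
  "complete_grid \<zeta> D = (\<Inter>d\<in>D. \<Union>t\<in>cyc_ring \<zeta>. {t + of_real r * d | r::real. True})"

definition lin_over :: "complex set \<Rightarrow> complex set \<Rightarrow> complex set" where
  "lin_over R S = {(\<Sum>s\<in>F. a s * s) | F a. finite F \<and> F \<subseteq> S \<and> (\<forall>s\<in>F. a s \<in> R)}"

end

theory Submission
  imports Defs "HOL-Computational_Algebra.Polynomial"
begin

text \<open>
  Since \<open>\<zeta>\<close> lies on the unit circle, \<open>\<zeta>\<^sup>2 = s\<zeta> - 1\<close> with \<open>s = \<zeta> + cnj \<zeta>\<close> real, so every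
  element of \<open>\<int>[\<zeta>]\<close> is \<open>a + b\<zeta>\<close> with \<open>a, b \<in> \<int>[s] \<subseteq> \<real>\<close>, and these coordinates are unique
  because \<open>\<zeta>\<close> is not real. A grid point is \<open>z = t\<^sub>1 + r\<^sub>1o\<^sub>1 = t\<^sub>2 + r\<^sub>2o\<^sub>2\<close>; comparing
  coordinates in \<open>t\<^sub>1 - t\<^sub>2 = r\<^sub>2o\<^sub>2 - r\<^sub>1o\<^sub>1\<close> gives a linear system for \<open>r\<^sub>1, r\<^sub>2\<close> with
  determinant \<open>D = \<alpha>\<delta> - \<beta>\<gamma>\<close>, so Cramer's rule puts \<open>r\<^sub>1D\<close> in \<open>\<int>[s]\<close>. Together with
  \<open>D(a + b\<zeta>) = (a\<delta> - b\<gamma>)o\<^sub>1 + (b\<alpha> - a\<beta>)o\<^sub>2\<close> this writes \<open>Dz\<close> as a \<open>\<int>[s]\<close>-combination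
  of \<open>o\<^sub>1\<close> and \<open>o\<^sub>2\<close>.
\<close>

lemma zring_eq_poly: "zring x = {poly p x | p. \<forall>i. coeff p i \<in> \<int>}"
proof (intro equalityI subsetI)
  fix z assume "z \<in> zring x"
  then obtain c N where z: "z = (\<Sum>i\<le>N. of_int (c i) * x ^ i)" unfolding zring_def by blast
  define p :: "complex poly" where "p = (\<Sum>i\<le>N. monom (of_int (c i)) i)"
  have "poly p x = z" by (simp add: p_def z poly_sum poly_monom)
  moreover have "coeff p j \<in> \<int>" for j by (simp add: p_def coeff_sum coeff_monom)
  ultimately show "z \<in> {poly p x | p. \<forall>i. coeff p i \<in> \<int>}" by blast
next
  fix z assume "z \<in> {poly p x | p. \<forall>i. coeff p i \<in> \<int>}"
  then obtain p where z: "z = poly p x" and "\<forall>i. coeff p i \<in> \<int>" by blast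
  then have "\<forall>i. \<exists>k. coeff p i = of_int k" by (auto elim: Ints_cases)
  then obtain c where "\<And>i. coeff p i = of_int (c i)" by metis
  then show "z \<in> zring x" unfolding zring_def z poly_altdef by auto
qed

lemma zring_add: "u \<in> zring x \<Longrightarrow> v \<in> zring x \<Longrightarrow> u + v \<in> zring x"
  unfolding zring_eq_poly by (clarify, rename_tac p q, rule_tac x = "p + q" in exI) simp

lemma zring_diff: "u \<in> zring x \<Longrightarrow> v \<in> zring x \<Longrightarrow> u - v \<in> zring x"
  unfolding zring_eq_poly by (clarify, rename_tac p q, rule_tac x = "p - q" in exI) simp

lemma zring_mult: "u \<in> zring x \<Longrightarrow> v \<in> zring x \<Longrightarrow> u * v \<in> zring x"
  unfolding zring_eq_poly
  by (clarify, rename_tac p q, rule_tac x = "p * q" in exI) (simp add: coeff_mult Ints_sum Ints_mult)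

lemma zring_Ints: "a \<in> \<int> \<Longrightarrow> a \<in> zring x"
  unfolding zring_eq_poly by (force intro!: exI[of _ "[:a:]"] simp: coeff_pCons split: nat.split)

lemma zring_generator: "x \<in> zring x"
  unfolding zring_eq_poly by (force intro!: exI[of _ "[:0, 1:]"] simp: coeff_pCons split: nat.split)

lemma zring_subset_Reals: "x \<in> \<real> \<Longrightarrow> zring x \<subseteq> \<real>"
  unfolding zring_def by auto

lemma zring_subset_if_quadratic:
  fixes x s :: complex
  assumes "x\<^sup>2 = s * x - 1"
  shows "zring x \<subseteq> {a + b * x | a b. a \<in> zring s \<and> b \<in> zring s}"
proof -
  have "poly p x \<in> {a + b * x | a b. a \<in> zring s \<and> b \<in> zring s}" if "\<forall>i. coeff p i \<in> \<int>" for p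
    using that
  proof (induction p)
    case 0
    have "poly 0 x = 0 + 0 * x" by simp
    then show ?case using zring_Ints[OF Ints_0] by blast
  next
    case (pCons c p)
    have "c \<in> \<int>" using pCons.prems[rule_format, of 0] by simp
    have "coeff p i \<in> \<int>" for i using pCons.prems[rule_format, of "Suc i"] by simp
    then obtain a b where ab: "poly p x = a + b * x" "a \<in> zring s" "b \<in> zring s"
      using pCons.IH by blast
    have "poly (pCons c p) x = c + a * x + b * x\<^sup>2"
      by (simp add: ab(1) algebra_simps power2_eq_square)
    also have "\<dots> = (c - b) + (a + b * s) * x"
      by (simp add: assms algebra_simps)
    finally have "poly (pCons c p) x = (c - b) + (a + b * s) * x" .
    moreover have "c - b \<in> zring s" "a + b * s \<in> zring s"
      using \<open>c \<in> \<int>\<close> ab(2,3) by (simp_all add: zring_diff zring_add zring_mult zring_Ints zring_generator)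
    ultimately show ?case by blast
  qed
  then show ?thesis unfolding zring_eq_poly by blast
qed

lemma unit_circle_square_eq:
  fixes z :: complex
  assumes "norm z = 1"
  shows "z\<^sup>2 = (z + cnj z) * z - 1"
proof -
  have "z * cnj z = 1" using complex_norm_square[of z] assms by simp
  then show ?thesis by (simp add: algebra_simps power2_eq_square)
qed

lemma add_cnj_Reals: "z + cnj z \<in> \<real>"
  by (simp add: complex_add_cnj)

lemma real_cyc_ring_subset_Reals: "real_cyc_ring \<zeta> \<subseteq> \<real>"
  using zring_subset_Reals[OF add_cnj_Reals] .

lemma real_coordinates_unique:
  fixes z a b c d :: complex
  assumes "z \<notin> \<real>" "a \<in> \<real>" "b \<in> \<real>" "c \<in> \<real>" "d \<in> \<real>"
    and "a + b * z = c + d * z"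
  shows "a = c \<and> b = d"
proof (cases "b = d")
  case False
  then have "z = (c - a) / (b - d)" using assms(6) by (simp add: field_simps)
  then show ?thesis using assms(1-5) by simp
qed (use assms(6) in simp)

lemma not_parallel_imp_det_nonzero:
  fixes z \<alpha> \<beta> \<gamma> \<delta> :: complex
  assumes "\<alpha> \<in> \<real>" "\<beta> \<in> \<real>" "\<gamma> \<in> \<real>" "\<delta> \<in> \<real>"
    and "\<not> parallel (\<alpha> + \<beta> * z) (\<gamma> + \<delta> * z)"
  shows "\<alpha> * \<delta> - \<beta> * \<gamma> \<noteq> 0"
proof
  assume det: "\<alpha> * \<delta> - \<beta> * \<gamma> = 0"
  have not_multiple: "\<gamma> + \<delta> * z \<noteq> c * (\<alpha> + \<beta> * z)" if "c \<in> \<real>" for c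
    using that assms(5) unfolding parallel_def by (metis Reals_cases)
  consider "\<beta> \<noteq> 0" | "\<alpha> \<noteq> 0" | "\<alpha> = 0" "\<beta> = 0" by blast
  then show False
  proof cases
    case 1
    have "\<beta> * (\<gamma> + \<delta> * z) = \<delta> * (\<alpha> + \<beta> * z)" using det by (simp add: algebra_simps)
    then show False using 1 not_multiple[of "\<delta> / \<beta>"] assms(2,4) by (simp add: field_simps)
  next
    case 2
    have "\<alpha> * (\<gamma> + \<delta> * z) = \<gamma> * (\<alpha> + \<beta> * z)" using det by (simp add: algebra_simps)
    then show False using 2 not_multiple[of "\<gamma> / \<alpha>"] assms(1,3) by (simp add: field_simps)
  next
    case 3
    then show False using assms(5) unfolding parallel_def by (metis add_0 mult_zero_left of_real_0)
  qed
qed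

lemma det_mult_eq_combination:
  fixes \<alpha> \<beta> \<gamma> \<delta> a b z :: "'a::comm_ring"
  shows "(\<alpha> * \<delta> - \<beta> * \<gamma>) * (a + b * z) = (a * \<delta> - b * \<gamma>) * (\<alpha> + \<beta> * z) + (b * \<alpha> - a * \<beta>) * (\<gamma> + \<delta> * z)"
  by (simp add: algebra_simps)

lemma lin_over_pairI:
  assumes "u \<noteq> v" "a \<in> R" "b \<in> R"
  shows "a * u + b * v \<in> lin_over R {u, v}"
  unfolding lin_over_def
  by (rule CollectI, rule exI[of _ "{u, v}"], rule exI[of _ "\<lambda>w. if w = u then a else b"])
    (use assms in auto)

lemma cyc_ring_subset_complete_grid: "cyc_ring \<zeta> \<subseteq> complete_grid \<zeta> D"
  unfolding complete_grid_def by (force intro: exI[of _ "0::real"])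

lemma complete_grid_det_mult:
  fixes \<zeta> o\<^sub>1 o\<^sub>2 \<alpha> \<beta> \<gamma> \<delta> :: complex
  assumes "norm \<zeta> = 1" "\<zeta> \<notin> \<real>"
    and "\<alpha> \<in> real_cyc_ring \<zeta>" "\<beta> \<in> real_cyc_ring \<zeta>"
    and "\<gamma> \<in> real_cyc_ring \<zeta>" "\<delta> \<in> real_cyc_ring \<zeta>"
    and o\<^sub>1: "o\<^sub>1 = \<alpha> + \<beta> * \<zeta>" and o\<^sub>2: "o\<^sub>2 = \<gamma> + \<delta> * \<zeta>"
    and "z \<in> complete_grid \<zeta> {o\<^sub>1, o\<^sub>2}"
  obtains t c where "t \<in> cyc_ring \<zeta>" "c \<in> real_cyc_ring \<zeta>"
    and "(\<alpha> * \<delta> - \<beta> * \<gamma>) * z = (\<alpha> * \<delta> - \<beta> * \<gamma>) * t + c * o\<^sub>1"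
proof -
  define D where "D = \<alpha> * \<delta> - \<beta> * \<gamma>"
  let ?R = "real_cyc_ring \<zeta>"
  have "z \<in> (\<Union>t\<in>cyc_ring \<zeta>. {t + of_real r * o\<^sub>1 | r. True})"
    and "z \<in> (\<Union>t\<in>cyc_ring \<zeta>. {t + of_real r * o\<^sub>2 | r. True})"
    using assms(9) unfolding complete_grid_def by auto
  then obtain t\<^sub>1 t\<^sub>2 and r\<^sub>1 r\<^sub>2 :: real where t: "t\<^sub>1 \<in> cyc_ring \<zeta>" "t\<^sub>2 \<in> cyc_ring \<zeta>"
    and z: "z = t\<^sub>1 + r\<^sub>1 * o\<^sub>1" "z = t\<^sub>2 + r\<^sub>2 * o\<^sub>2"
    by blast
  obtain \<phi> \<psi> where \<phi>\<psi>: "t\<^sub>1 - t\<^sub>2 = \<phi> + \<psi> * \<zeta>" "\<phi> \<in> ?R" "\<psi> \<in> ?R"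
    using zring_subset_if_quadratic[OF unit_circle_square_eq[OF assms(1)]] zring_diff[OF t] by blast
  have "\<phi> + \<psi> * \<zeta> = (r\<^sub>2 * \<gamma> - r\<^sub>1 * \<alpha>) + (r\<^sub>2 * \<delta> - r\<^sub>1 * \<beta>) * \<zeta>"
    using z \<phi>\<psi>(1) unfolding o\<^sub>1 o\<^sub>2 by (simp add: algebra_simps)
  moreover have "r\<^sub>2 * \<gamma> - r\<^sub>1 * \<alpha> \<in> \<real>" "r\<^sub>2 * \<delta> - r\<^sub>1 * \<beta> \<in> \<real>"
    using assms(3-6) real_cyc_ring_subset_Reals by (auto intro!: Reals_diff Reals_mult)
  ultimately have \<phi>: "\<phi> = r\<^sub>2 * \<gamma> - r\<^sub>1 * \<alpha>" and \<psi>: "\<psi> = r\<^sub>2 * \<delta> - r\<^sub>1 * \<beta>"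
    using real_coordinates_unique[OF assms(2)] \<phi>\<psi>(2,3) real_cyc_ring_subset_Reals by blast+
  have r\<^sub>1: "r\<^sub>1 * D = \<gamma> * \<psi> - \<delta> * \<phi>" unfolding D_def \<phi> \<psi> by (simp add: algebra_simps)
  have "D * z = D * t\<^sub>1 + (r\<^sub>1 * D) * o\<^sub>1" unfolding z(1) by (simp add: algebra_simps)
  also have "\<dots> = D * t\<^sub>1 + (\<gamma> * \<psi> - \<delta> * \<phi>) * o\<^sub>1" unfolding r\<^sub>1 ..
  finally have "D * z = D * t\<^sub>1 + (\<gamma> * \<psi> - \<delta> * \<phi>) * o\<^sub>1" .
  moreover have "\<gamma> * \<psi> - \<delta> * \<phi> \<in> ?R"
    using assms(5,6) \<phi>\<psi>(2,3) by (simp add: zring_diff zring_mult)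
  ultimately show thesis using that t(1) unfolding D_def by blast
qed

lemma complete_grid_subset_lin_over:
  fixes \<zeta> o\<^sub>1 o\<^sub>2 \<alpha> \<beta> \<gamma> \<delta> :: complex
  assumes "norm \<zeta> = 1" "\<zeta> \<notin> \<real>"
    and coeffs: "\<alpha> \<in> real_cyc_ring \<zeta>" "\<beta> \<in> real_cyc_ring \<zeta>"
      "\<gamma> \<in> real_cyc_ring \<zeta>" "\<delta> \<in> real_cyc_ring \<zeta>"
    and o\<^sub>1: "o\<^sub>1 = \<alpha> + \<beta> * \<zeta>" and o\<^sub>2: "o\<^sub>2 = \<gamma> + \<delta> * \<zeta>"
    and det: "\<alpha> * \<delta> - \<beta> * \<gamma> \<noteq> 0"
  shows "complete_grid \<zeta> {o\<^sub>1, o\<^sub>2} \<subseteq>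
    lin_over (real_cyc_ring \<zeta>) {o\<^sub>1 / (\<alpha> * \<delta> - \<beta> * \<gamma>), o\<^sub>2 / (\<alpha> * \<delta> - \<beta> * \<gamma>)}"
proof
  define D where "D = \<alpha> * \<delta> - \<beta> * \<gamma>"
  let ?R = "real_cyc_ring \<zeta>"
  fix z assume "z \<in> complete_grid \<zeta> {o\<^sub>1, o\<^sub>2}"
  then obtain t c where t: "t \<in> cyc_ring \<zeta>" and c: "c \<in> ?R" and z: "D * z = D * t + c * o\<^sub>1"
    using complete_grid_det_mult[OF assms(1-8)] unfolding D_def by blast
  obtain a b where ab: "t = a + b * \<zeta>" "a \<in> ?R" "b \<in> ?R"
    using zring_subset_if_quadratic[OF unit_circle_square_eq[OF assms(1)]] t by blast
  define X where "X = a * \<delta> - b * \<gamma> + c"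
  define Y where "Y = b * \<alpha> - a * \<beta>"
  have "D * z = X * o\<^sub>1 + Y * o\<^sub>2"
    using z det_mult_eq_combination[of \<alpha> \<delta> \<beta> \<gamma> a b \<zeta>]
    unfolding X_def Y_def D_def ab(1) o\<^sub>1 o\<^sub>2 by (simp add: algebra_simps)
  then have "z = (X * o\<^sub>1 + Y * o\<^sub>2) / D" using det unfolding D_def by (simp add: eq_divide_eq mult.commute)
  then have z_eq: "z = X * (o\<^sub>1 / D) + Y * (o\<^sub>2 / D)" by (simp add: add_divide_distrib)
  have "o\<^sub>1 \<noteq> o\<^sub>2"
  proof
    assume "o\<^sub>1 = o\<^sub>2"
    then have "\<alpha> + \<beta> * \<zeta> = \<gamma> + \<delta> * \<zeta>" unfolding o\<^sub>1 o\<^sub>2 .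
    then have "\<alpha> = \<gamma> \<and> \<beta> = \<delta>"
      using real_coordinates_unique[OF assms(2)] coeffs real_cyc_ring_subset_Reals by blast
    then show False using det by (simp add: mult.commute)
  qed
  then have neq: "o\<^sub>1 / D \<noteq> o\<^sub>2 / D" using det unfolding D_def by simp
  have "X \<in> ?R" "Y \<in> ?R"
    using ab(2,3) c coeffs unfolding X_def Y_def by (simp_all add: zring_add zring_diff zring_mult)
  then have "z \<in> lin_over ?R {o\<^sub>1 / D, o\<^sub>2 / D}"
    unfolding z_eq by (rule lin_over_pairI[OF neq])
  then show "z \<in> lin_over ?R {o\<^sub>1 / (\<alpha> * \<delta> - \<beta> * \<gamma>), o\<^sub>2 / (\<alpha> * \<delta> - \<beta> * \<gamma>)}"
    unfolding D_def .
qed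

lemma primitive_root_of_unity_norm:
  assumes "primitive_root_of_unity n \<zeta>" "n > 0"
  shows "norm \<zeta> = 1"
proof -
  have "norm \<zeta> ^ n = 1" using assms(1) unfolding primitive_root_of_unity_def by (metis norm_one norm_power)
  then show ?thesis using assms(2) power_eq_iff_eq_base[of n "norm \<zeta>" 1] by simp
qed

lemma primitive_root_of_unity_not_real:
  assumes "primitive_root_of_unity n \<zeta>" "n \<ge> 3"
  shows "\<zeta> \<notin> \<real>"
proof
  assume "\<zeta> \<in> \<real>"
  then obtain r where r: "\<zeta> = of_real r" by (auto elim: Reals_cases)
  have "\<bar>r\<bar> = 1" using primitive_root_of_unity_norm[OF assms(1)] assms(2) r by simp
  then have "\<zeta> ^ 2 = 1" unfolding r by (metis abs_1 of_real_1 of_real_power power2_abs power_one)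
  then show False using assms unfolding primitive_root_of_unity_def by force
qed

theorem proposition5p2:
  fixes n :: nat and \<zeta> o\<^sub>1 o\<^sub>2 \<alpha> \<beta> \<gamma> \<delta> :: complex
  assumes "n \<ge> 3"
    and "primitive_root_of_unity n \<zeta>"
    and "direction \<zeta> o\<^sub>1" and "direction \<zeta> o\<^sub>2"
    and "\<not> parallel o\<^sub>1 o\<^sub>2"
    and "\<alpha> \<in> real_cyc_ring \<zeta>" "\<beta> \<in> real_cyc_ring \<zeta>"
    and "\<gamma> \<in> real_cyc_ring \<zeta>" "\<delta> \<in> real_cyc_ring \<zeta>"
    and "o\<^sub>1 = \<alpha> + \<beta> * \<zeta>" and "o\<^sub>2 = \<gamma> + \<delta> * \<zeta>"
  shows "cyc_ring \<zeta> \<subseteq> complete_grid \<zeta> {o\<^sub>1, o\<^sub>2}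
    \<and> complete_grid \<zeta> {o\<^sub>1, o\<^sub>2} \<subseteq> (UNIV :: complex set)
    \<and> complete_grid \<zeta> {o\<^sub>1, o\<^sub>2} \<subseteq>
        lin_over (real_cyc_ring \<zeta>)
          {o\<^sub>1 / (\<alpha> * \<delta> - \<beta> * \<gamma>), o\<^sub>2 / (\<alpha> * \<delta> - \<beta> * \<gamma>)}"
proof -
  have "norm \<zeta> = 1" using primitive_root_of_unity_norm assms(1,2) by simp
  moreover have "\<zeta> \<notin> \<real>" using primitive_root_of_unity_not_real assms(1,2) by simp
  moreover have "\<alpha> * \<delta> - \<beta> * \<gamma> \<noteq> 0"
    using not_parallel_imp_det_nonzero assms(5-11) real_cyc_ring_subset_Reals by blast
  ultimately show ?thesis
    using cyc_ring_subset_complete_grid complete_grid_subset_lin_over assms(6-11) by simp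
qed

end
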